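(* Let $u:\mathbb{T}\to\mathbb{R}$ be smooth with finitely many critical points, let $A$ be the zero set of $u'$, let $\eta>0$ be sufficiently small, let $\tilde v>0$ be deterministic and $\omega>0$. Then, with parameters $(\nu,t,y)$ ranging over $\nu\in(0,1]$, $t\in(0,\nu^{-1}]$, $y\in\mathbb{T}$ (and with the threshold on $\epsilon$ depending only on $\omega,u,\tilde v,\eta$), $$\det(M_t)(y)\le\epsilon\,\tilde v\,t^{\omega+3}\nu^{\omega}\ \Rightarrow_\epsilon\ \sup_{s\le t}\mathrm{dist}(y+\sqrt\nu B_s,A)\le\eta .$$ Moreover, suppose $u$ has a critical point of order $n$ at $y_0$ and $\eta=\eta(y_0)>0$ is small enough that for $|z-y_0|\le\eta$, $$c_1|z-y_0|^n\le|u'(z)|\le c_2|z-y_0|^n,\qquad c_3|z-y_0|^{n-1}\le|u''(z)|\le c_4|z-y_0|^{n-1}$$ for some constants $c_1,\dots,c_4>0$. Then for $|y-y_0|<\eta$, $$\det(M_t)(y)\le\epsilon\,\tilde v\,t^{\omega+3}\nu^{\omega}\ \Rightarrow_\epsilon\ h(y,\nu,t)\le c(u)\sup_{s\in[0,t]}|y-y_0+\sqrt\nu B_s|^{n-1},$$ with $c(u)$ a constant depending only on $u$.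
   Context: $(B_t)$ is a standard Brownian motion; $u',u''$ are viewed as $2\pi$-periodic functions on $\mathbb{R}$ and distances are taken on $\mathbb{T}$. $\det(M_t)(y):=\int_0^t\big(\int_r^t u'(y+\sqrt\nu B_s)\,ds-\frac1t\int_0^t\int_m^t u'(y+\sqrt\nu B_s)\,ds\,dm\big)^2dr$ and $h(y,\nu,t)=\sup_{s,z\in[0,t],\,\tau\in[0,1]}|u''(y+\sqrt\nu(\tau B_s+(1-\tau)B_z))|$. A critical point $y_0$ has order $n\ge1$ if $u'(y_0)=\dots=u^{(n)}(y_0)=0\neq u^{(n+1)}(y_0)$. Almost-false terminology: a family of events $A^\zeta_\epsilon$ is almost false if for every $p>0$ there exist $C_p,\epsilon_0>0$ independent of the parameters $\zeta$ with $\mathbb P(A^\zeta_\epsilon)\le C_p\epsilon^p$ for all $\zeta$ and $\epsilon\in(0,\epsilon_0]$; $A\Rightarrow_\epsilon B$ means $A\setminus B$ is almost false. *)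

theory Defs
  imports "HOL-Probability.Probability"
begin

definition std_BM :: "'a measure \<Rightarrow> (real \<Rightarrow> 'a \<Rightarrow> real) \<Rightarrow> bool" where
  "std_BM M B \<longleftrightarrow>
     prob_space M \<and>
     (\<forall>t\<ge>0. B t \<in> borel_measurable M) \<and>
     (\<forall>\<omega>\<in>space M. B 0 \<omega> = 0 \<and> continuous_on {0..} (\<lambda>t. B t \<omega>)) \<and>
     (\<forall>s t. 0 \<le> s \<and> s < t \<longrightarrow>
        distributed M lborel (\<lambda>\<omega>. B t \<omega> - B s \<omega>)
          (\<lambda>x. ennreal (normal_density 0 (sqrt (t - s)) x))) \<and>
     (\<forall>(n::nat) (ts::nat \<Rightarrow> real). (\<forall>i<n. 0 \<le> ts i \<and> ts i < ts (Suc i)) \<longrightarrow>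
        prob_space.indep_vars M (\<lambda>_. borel)
          (\<lambda>i \<omega>. B (ts (Suc i)) \<omega> - B (ts i) \<omega>) {..<n})"

text \<open>Smooth 2pi-periodic real function (a smooth function on the torus).\<close>
definition smooth_periodic :: "(real \<Rightarrow> real) \<Rightarrow> bool" where
  "smooth_periodic u \<longleftrightarrow>
     (\<forall>k x. (deriv ^^ k) u differentiable (at x)) \<and> (\<forall>x. u (x + 2 * pi) = u x)"

definition tdist :: "real \<Rightarrow> real \<Rightarrow> real" where
  "tdist x y = (INF k::int. \<bar>x - y - 2 * pi * real_of_int k\<bar>)"

definition detM :: "(real \<Rightarrow> real) \<Rightarrow> (real \<Rightarrow> 'a \<Rightarrow> real) \<Rightarrow> real \<Rightarrow> real \<Rightarrow> real \<Rightarrow> 'a \<Rightarrow> real" where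
  "detM u B \<nu> t y \<omega> =
     integral {0..t} (\<lambda>r.
       (integral {r..t} (\<lambda>s. deriv u (y + sqrt \<nu> * B s \<omega>))
        - (1 / t) * integral {0..t} (\<lambda>m. integral {m..t} (\<lambda>s. deriv u (y + sqrt \<nu> * B s \<omega>))))\<^sup>2)"

definition hfun :: "(real \<Rightarrow> real) \<Rightarrow> (real \<Rightarrow> 'a \<Rightarrow> real) \<Rightarrow> real \<Rightarrow> real \<Rightarrow> real \<Rightarrow> 'a \<Rightarrow> real" where
  "hfun u B y \<nu> t \<omega> =
     Sup ((\<lambda>(s, z, \<tau>). \<bar>deriv (deriv u) (y + sqrt \<nu> * (\<tau> * B s \<omega> + (1 - \<tau>) * B z \<omega>))\<bar>)
          ` ({0..t} \<times> {0..t} \<times> {0..1}))"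

text \<open>Almost false family of events indexed by parameters in Z and epsilon > 0.
  The probability bound is stated via a measurable superset (outer probability),
  so no measurability of the events needs to be assumed.\<close>
definition almost_false :: "'a measure \<Rightarrow> ('z \<Rightarrow> real \<Rightarrow> 'a set) \<Rightarrow> 'z set \<Rightarrow> bool" where
  "almost_false M A Z \<longleftrightarrow>
     (\<forall>p>0. \<exists>C \<epsilon>0. C > 0 \<and> \<epsilon>0 > 0 \<and>
        (\<forall>\<zeta>\<in>Z. \<forall>\<epsilon>. 0 < \<epsilon> \<and> \<epsilon> \<le> \<epsilon>0 \<longrightarrow>
           (\<exists>E\<in>sets M. A \<zeta> \<epsilon> \<subseteq> E \<and> measure M E \<le> C * \<epsilon> powr p)))"

definition implies_eps :: "'a measure \<Rightarrow> ('z \<Rightarrow> real \<Rightarrow> 'a set) \<Rightarrow> ('z \<Rightarrow> real \<Rightarrow> 'a set) \<Rightarrow> 'z set \<Rightarrow> bool" where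
  "implies_eps M A B Z \<longleftrightarrow> almost_false M (\<lambda>\<zeta> \<epsilon>. A \<zeta> \<epsilon> - B \<zeta> \<epsilon>) Z"

end

theory Submission
  imports Defs
begin

text \<open>If the path y + \<surd>\<nu> B leaves the \<eta>-neighbourhood of the critical set at some time s0
  while B has no large increments on dyadic intervals of length L = t / 2^m, then on a window of
  length L next to s0 the path stays \<eta>/2 away from the critical set, where \<bar>u'\<bar> \<ge> \<delta>. The primitive
  r \<mapsto> integral {r..t} u'(y + \<surd>\<nu> B) then moves at speed \<ge> \<delta> on the window, which forces
  det(M_t) \<ge> \<delta>^2 L^3 / 64. Choosing (1/8)^m comparable to \<epsilon> (t\<nu>)^\<omega>' makes this exceed the threshold,
  while Gaussian moment bounds and a union bound over dyadic intervals show that large dyadic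
  increments occur with probability O(\<epsilon>^p) for every p.

  The second statement is deterministic: \<bar>u''(x)\<bar> \<le> c \<bar>x - y0\<bar>^(n-1) everywhere (near y0 by
  hypothesis, elsewhere because u'' is bounded), and h only evaluates u'' between two points of the
  path.\<close>

definition dyadic_floor :: "nat \<Rightarrow> real \<Rightarrow> real" where
  "dyadic_floor k x = of_int \<lfloor>x * 2^k\<rfloor> / 2^k"

lemma dyadic_floor_bounds:
  assumes "0 \<le> x" "x \<le> 1"
  shows "0 \<le> dyadic_floor k x" "dyadic_floor k x \<le> 1"
proof -
  have "0 \<le> \<lfloor>x * 2^k\<rfloor>" using assms by simp
  then show "0 \<le> dyadic_floor k x" by (simp add: dyadic_floor_def)
  have "of_int \<lfloor>x * 2^k\<rfloor> \<le> x * 2^k" by simp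
  also have "\<dots> \<le> 2^k" using assms by simp
  finally show "dyadic_floor k x \<le> 1" by (simp add: dyadic_floor_def)
qed

lemma dyadic_floor_dist: "\<bar>dyadic_floor k x - x\<bar> \<le> 1 / 2^k"
proof -
  have "\<bar>of_int \<lfloor>x * 2^k\<rfloor> - x * 2^k\<bar> \<le> 1"
    using of_int_floor_le[of "x * 2^k"] real_of_int_floor_add_one_gt[of "x * 2^k"] by linarith
  then have "\<bar>of_int \<lfloor>x * 2^k\<rfloor> - x * 2^k\<bar> / 2^k \<le> 1 / 2^k" by (simp add: divide_right_mono)
  moreover have "dyadic_floor k x - x = (of_int \<lfloor>x * 2^k\<rfloor> - x * 2^k) / 2^k"
    by (simp add: dyadic_floor_def field_simps)
  ultimately show ?thesis by (simp add: abs_divide)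
qed

lemma dyadic_floor_tendsto: "(\<lambda>k. dyadic_floor k x) \<longlonglongrightarrow> x"
proof -
  have "(\<lambda>k. 1 / (2::real)^k) \<longlonglongrightarrow> 0"
    by (simp add: LIMSEQ_divide_realpow_zero)
  then have "(\<lambda>k. dyadic_floor k x - x) \<longlonglongrightarrow> 0"
    by (rule Lim_null_comparison[rotated]) (simp add: dyadic_floor_dist)
  then show ?thesis by (simp add: LIM_zero_cancel)
qed

text \<open>Passing from level n to level n+1 either keeps the dyadic point or moves it to the
  neighbouring point of the finer grid.\<close>

lemma dyadic_floor_Suc_diff_le:
  fixes g :: "real \<Rightarrow> real"
  assumes x: "0 \<le> x" "x \<le> 1"
    and inc: "\<And>j::nat. j < 2^(Suc n) \<Longrightarrow> \<bar>g (real (Suc j) / 2^(Suc n)) - g (real j / 2^(Suc n))\<bar> \<le> b"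
  shows "\<bar>g (dyadic_floor (Suc n) x) - g (dyadic_floor n x)\<bar> \<le> b"
proof -
  define j where "j = \<lfloor>x * 2^(Suc n)\<rfloor>"
  have j0: "0 \<le> j" using x by (simp add: j_def)
  have "of_int j \<le> x * 2^(Suc n)" by (simp add: j_def)
  also have "\<dots> \<le> 2^(Suc n)" using x by simp
  finally have "real_of_int j \<le> real_of_int (2^(Suc n))" by simp
  then have j1: "j \<le> 2^(Suc n)" by (simp only: of_int_le_iff)
  have b0: "0 \<le> b" using inc[of 0] by (meson abs_ge_zero order_trans zero_less_power zero_less_numeral)
  have hf: "\<lfloor>x * 2^n\<rfloor> = j div 2"
  proof -
    have "x * 2^n = x * 2^(Suc n) / real_of_int 2" by simp
    then show ?thesis unfolding j_def using floor_divide_real_eq_div[of 2 "x * 2^(Suc n)"] by simp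
  qed
  show ?thesis
  proof (cases "even j")
    case True
    then have "j = 2 * (j div 2)" by simp
    then have "dyadic_floor (Suc n) x = dyadic_floor n x"
      unfolding dyadic_floor_def hf j_def[symmetric]
      by (metis (no_types, lifting) nonzero_mult_divide_mult_cancel_left of_int_mult of_int_numeral
          power_Suc zero_neq_numeral)
    then show ?thesis using b0 by simp
  next
    case False
    then have jo: "j = 2 * (j div 2) + 1" by simp
    define i where "i = nat (j - 1)"
    have j1': "1 \<le> j" using j0 False by presburger
    have ij: "real i = of_int j - 1" using j1' by (simp add: i_def of_nat_nat)
    have ilt: "i < 2^(Suc n)"
    proof -
      have "j \<noteq> 2^(Suc n)" using False by auto
      then have "j < 2^Suc n" using j1 by simp
      then have "real_of_int j < real_of_int (2^Suc n)" by (simp only: of_int_less_iff)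
      then have "real i < real (2^Suc n)" using ij by simp
      then show ?thesis by (simp only: of_nat_less_iff)
    qed
    have e1: "dyadic_floor (Suc n) x = real (Suc i) / 2^(Suc n)"
      unfolding dyadic_floor_def j_def[symmetric] using ij by simp
    have e2: "dyadic_floor n x = real i / 2^(Suc n)"
    proof -
      have "real_of_int j = real_of_int (2 * (j div 2) + 1)" using arg_cong[OF jo, of real_of_int] .
      then have "real_of_int (j div 2) = (of_int j - 1) / 2" by simp
      then show ?thesis unfolding dyadic_floor_def hf using ij by (simp add: field_simps)
    qed
    show ?thesis using inc[OF ilt] e1 e2 by simp
  qed
qed

lemma dyadic_floor_telescope:
  fixes g :: "real \<Rightarrow> real"
  assumes inc: "\<And>k j. m \<le> k \<Longrightarrow> j < 2^k \<Longrightarrow> \<bar>g (real (Suc j) / 2^k) - g (real j / 2^k)\<bar> \<le> bnd k"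
    and x: "0 \<le> x" "x \<le> 1" and "m \<le> n"
  shows "\<bar>g (dyadic_floor n x) - g (dyadic_floor m x)\<bar> \<le> (\<Sum>k\<in>{m<..n}. bnd k)"
  using \<open>m \<le> n\<close>
proof (induction n rule: dec_induct)
  case base
  then show ?case by simp
next
  case (step n)
  have "\<bar>g (dyadic_floor (Suc n) x) - g (dyadic_floor n x)\<bar> \<le> bnd (Suc n)"
    using step by (intro dyadic_floor_Suc_diff_le[OF x] inc) auto
  moreover have "{m<..Suc n} = insert (Suc n) {m<..n}" using step by auto
  ultimately show ?case using step.IH by simp
qed

lemma dyadic_floor_approx:
  fixes g :: "real \<Rightarrow> real"
  assumes cont: "continuous_on {0..1} g"
    and inc: "\<And>k j. m \<le> k \<Longrightarrow> j < 2^k \<Longrightarrow> \<bar>g (real (Suc j) / 2^k) - g (real j / 2^k)\<bar> \<le> bnd k"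
    and S: "\<And>n. (\<Sum>k\<in>{m<..n}. bnd k) \<le> S"
    and x: "0 \<le> x" "x \<le> 1"
  shows "\<bar>g x - g (dyadic_floor m x)\<bar> \<le> S"
proof -
  have "(\<lambda>n. g (dyadic_floor n x)) \<longlonglongrightarrow> g x"
    by (rule continuous_on_tendsto_compose[OF cont dyadic_floor_tendsto])
      (use x dyadic_floor_bounds[OF x] in auto)
  then have "(\<lambda>n. \<bar>g (dyadic_floor n x) - g (dyadic_floor m x)\<bar>) \<longlonglongrightarrow> \<bar>g x - g (dyadic_floor m x)\<bar>"
    by (intro tendsto_intros)
  then show ?thesis
    by (rule LIMSEQ_le_const2) (use dyadic_floor_telescope[OF inc x] S order_trans in blast)
qed

lemma dyadic_floor_near_diff_le:
  fixes g :: "real \<Rightarrow> real"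
  assumes inc: "\<And>j. j < 2^m \<Longrightarrow> \<bar>g (real (Suc j) / 2^m) - g (real j / 2^m)\<bar> \<le> b"
    and x: "0 \<le> x" "x \<le> 1" and y: "0 \<le> y" "y \<le> 1" and xy: "\<bar>x - y\<bar> \<le> 1 / 2^m"
  shows "\<bar>g (dyadic_floor m x) - g (dyadic_floor m y)\<bar> \<le> b"
proof -
  have adjacent: "\<bar>g (dyadic_floor m x) - g (dyadic_floor m y)\<bar> \<le> b"
    if x: "0 \<le> x" "x \<le> 1" and y: "0 \<le> y" and fl: "\<lfloor>x * 2^m\<rfloor> = \<lfloor>y * 2^m\<rfloor> + 1" for x y
  proof -
    define i where "i = nat \<lfloor>y * 2^m\<rfloor>"
    have iy: "real i = of_int \<lfloor>y * 2^m\<rfloor>" using y by (simp add: i_def of_nat_nat)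
    have "of_int \<lfloor>x * 2^m\<rfloor> \<le> x * 2^m" by simp
    also have "\<dots> \<le> 2^m" using x by simp
    finally have "real i + 1 \<le> 2^m" using fl iy by simp
    then have "real i < 2^m" by linarith
    then have i: "i < 2^m" by (metis of_nat_less_iff of_nat_numeral of_nat_power)
    have "dyadic_floor m x = real (Suc i) / 2^m" "dyadic_floor m y = real i / 2^m"
      unfolding dyadic_floor_def fl using iy by simp_all
    then show ?thesis using inc[OF i] by simp
  qed
  have "\<bar>x * 2^m - y * 2^m\<bar> = \<bar>x - y\<bar> * 2^m" by (simp add: abs_mult left_diff_distrib[symmetric])
  also have "\<dots> \<le> 1" using xy by (simp add: field_simps)
  finally consider "\<lfloor>x * 2^m\<rfloor> = \<lfloor>y * 2^m\<rfloor>" | "\<lfloor>x * 2^m\<rfloor> = \<lfloor>y * 2^m\<rfloor> + 1"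
    | "\<lfloor>y * 2^m\<rfloor> = \<lfloor>x * 2^m\<rfloor> + 1" by linarith
  then show ?thesis
  proof cases
    case 1
    have "0 \<le> b" using inc[of 0] by (meson abs_ge_zero order_trans zero_less_power zero_less_numeral)
    with 1 show ?thesis by (simp add: dyadic_floor_def)
  next
    case 2
    then show ?thesis using adjacent x y by blast
  next
    case 3
    then show ?thesis using adjacent[of y x] x y by (simp add: abs_minus_commute)
  qed
qed

lemma dyadic_chaining:
  fixes g :: "real \<Rightarrow> real"
  assumes cont: "continuous_on {0..1} g"
    and inc: "\<And>k j. m \<le> k \<Longrightarrow> j < 2^k \<Longrightarrow> \<bar>g (real (Suc j) / 2^k) - g (real j / 2^k)\<bar> \<le> bnd k"
    and S: "\<And>n. (\<Sum>k\<in>{m<..n}. bnd k) \<le> S"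
    and x: "0 \<le> x" "x \<le> 1" and y: "0 \<le> y" "y \<le> 1" and xy: "\<bar>x - y\<bar> \<le> 1 / 2^m"
  shows "\<bar>g x - g y\<bar> \<le> bnd m + 2 * S"
  using dyadic_floor_approx[OF cont inc S x] dyadic_floor_approx[OF cont inc S y]
    dyadic_floor_near_diff_le[OF inc x y xy]
  by (simp add: abs_le_iff)

lemma continuous_abs_ge_sign_cases:
  fixes f :: "real \<Rightarrow> real"
  assumes cont: "continuous_on {a..b} f" and "0 < \<delta>"
    and nz: "\<And>s. s \<in> {a..b} \<Longrightarrow> \<delta> \<le> \<bar>f s\<bar>"
  shows "(\<forall>s\<in>{a..b}. \<delta> \<le> f s) \<or> (\<forall>s\<in>{a..b}. f s \<le> - \<delta>)"
proof (rule ccontr)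
  assume "\<not> ?thesis"
  then obtain p q where p: "p \<in> {a..b}" "\<not> \<delta> \<le> f p" and q: "q \<in> {a..b}" "\<not> f q \<le> - \<delta>"
    by blast
  have fp: "f p \<le> - \<delta>" using nz[OF p(1)] p(2) by linarith
  have fq: "\<delta> \<le> f q" using nz[OF q(1)] q(2) by linarith
  obtain x where "x \<in> {a..b}" "f x = 0"
  proof (cases "p \<le> q")
    case True
    have "continuous_on {p..q} f" using p q by (intro continuous_on_subset[OF cont]) auto
    then obtain x where "p \<le> x" "x \<le> q" "f x = 0"
      using IVT'[of f p 0 q] fp fq \<open>0 < \<delta>\<close> True by auto
    then show ?thesis using p q by (intro that[of x]) auto
  next
    case False
    have "continuous_on {q..p} f" using p q by (intro continuous_on_subset[OF cont]) auto
    then obtain x where "q \<le> x" "x \<le> p" "f x = 0"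
      using IVT2'[of f p 0 q] fp fq \<open>0 < \<delta>\<close> False by auto
    then show ?thesis using p q by (intro that[of x]) auto
  qed
  then show False using nz \<open>0 < \<delta>\<close> by fastforce
qed

lemma abs_integral_ge_if_abs_ge:
  fixes f :: "real \<Rightarrow> real"
  assumes cont: "continuous_on {a..b} f" and "0 < \<delta>" and "a \<le> b"
    and nz: "\<And>s. s \<in> {a..b} \<Longrightarrow> \<delta> \<le> \<bar>f s\<bar>"
  shows "\<delta> * (b - a) \<le> \<bar>integral {a..b} f\<bar>"
proof -
  have f: "f integrable_on {a..b}" by (rule integrable_continuous_interval[OF cont])
  from continuous_abs_ge_sign_cases[OF cont \<open>0 < \<delta>\<close> nz]
  show ?thesis
  proof
    assume "\<forall>s\<in>{a..b}. \<delta> \<le> f s"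
    then have "integral {a..b} (\<lambda>_. \<delta>) \<le> integral {a..b} f" by (intro integral_le f) auto
    then show ?thesis using \<open>a \<le> b\<close> by (simp add: mult.commute)
  next
    assume "\<forall>s\<in>{a..b}. f s \<le> - \<delta>"
    then have "integral {a..b} f \<le> integral {a..b} (\<lambda>_. - \<delta>)" by (intro integral_le f) auto
    then show ?thesis using \<open>a \<le> b\<close> by (simp add: mult.commute)
  qed
qed

lemma far_from_constant_on_quarter:
  fixes F :: "real \<Rightarrow> real"
  assumes "0 < \<delta>"
    and speed: "\<And>r1 r2. a \<le> r1 \<Longrightarrow> r1 \<le> r2 \<Longrightarrow> r2 \<le> a + L \<Longrightarrow> \<delta> * (r2 - r1) \<le> \<bar>F r1 - F r2\<bar>"
  obtains p where "p \<in> {a, a + 3 * L / 4}" "\<And>r. r \<in> {p..p + L/4} \<Longrightarrow> \<delta> * L / 4 \<le> \<bar>F r - c\<bar>"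
proof -
  have "(\<forall>r\<in>{a..a + L/4}. \<delta> * L / 4 \<le> \<bar>F r - c\<bar>) \<or> (\<forall>r\<in>{a + 3*L/4..a + L}. \<delta> * L / 4 \<le> \<bar>F r - c\<bar>)"
  proof (rule ccontr)
    assume "\<not> ?thesis"
    then obtain r1 r2 where r1: "r1 \<in> {a..a + L/4}" "\<bar>F r1 - c\<bar> < \<delta> * L / 4"
      and r2: "r2 \<in> {a + 3*L/4..a + L}" "\<bar>F r2 - c\<bar> < \<delta> * L / 4" by force
    have "\<delta> * (r2 - r1) \<le> \<bar>F r1 - F r2\<bar>" using r1 r2 by (intro speed) auto
    moreover have "\<delta> * (L/2) \<le> \<delta> * (r2 - r1)" using r1 r2 \<open>0 < \<delta>\<close> by (intro mult_left_mono) auto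
    ultimately show False using r1 r2 by (simp add: abs_le_iff abs_less_iff)
  qed
  then show ?thesis
  proof
    assume "\<forall>r\<in>{a..a + L/4}. \<delta> * L / 4 \<le> \<bar>F r - c\<bar>"
    then show ?thesis by (intro that[of a]) auto
  next
    assume "\<forall>r\<in>{a + 3*L/4..a + L}. \<delta> * L / 4 \<le> \<bar>F r - c\<bar>"
    then show ?thesis by (intro that[of "a + 3*L/4"]) auto
  qed
qed

text \<open>The tail integral r \<mapsto> integral {r..t} f has slope at least \<delta> on the window, hence stays
  \<delta> L / 4 away from c on a quarter of it; this is where the cube of L comes from.\<close>

lemma integral_sq_tail_integral_ge:
  fixes f :: "real \<Rightarrow> real"
  assumes cont: "continuous_on {0..t} f" and a: "0 \<le> a" "a + L \<le> t" "0 < L" and "0 < \<delta>"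
    and nz: "\<And>s. s \<in> {a..a + L} \<Longrightarrow> \<delta> \<le> \<bar>f s\<bar>"
  shows "\<delta>\<^sup>2 * L^3 / 64 \<le> integral {0..t} (\<lambda>r. (integral {r..t} f - c)\<^sup>2)"
proof -
  define F where "F r = integral {r..t} f" for r
  have cont_sub: "continuous_on {p..q} f" if "0 \<le> p" "q \<le> t" for p q
    using that by (intro continuous_on_subset[OF cont]) auto
  have speed: "\<delta> * (r2 - r1) \<le> \<bar>F r1 - F r2\<bar>" if r: "a \<le> r1" "r1 \<le> r2" "r2 \<le> a + L" for r1 r2
  proof -
    have "F r1 - F r2 = integral {r1..r2} f"
      unfolding F_def using r a integral_minus_sets'[of r1 t r2 f]
        integrable_continuous_interval[OF cont_sub[of r1 t]] by simp
    moreover have "\<delta> * (r2 - r1) \<le> \<bar>integral {r1..r2} f\<bar>"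
      using r a by (intro abs_integral_ge_if_abs_ge cont_sub \<open>0 < \<delta>\<close> nz) auto
    ultimately show ?thesis by simp
  qed
  obtain p where p: "p \<in> {a, a + 3*L/4}" and far: "\<And>r. r \<in> {p..p + L/4} \<Longrightarrow> \<delta> * L / 4 \<le> \<bar>F r - c\<bar>"
    using far_from_constant_on_quarter[OF \<open>0 < \<delta>\<close> speed] by blast
  have "continuous_on {0..t} F"
    unfolding F_def by (rule indefinite_integral_continuous_1'[OF integrable_continuous_interval[OF cont]])
  then have G: "continuous_on {0..t} (\<lambda>r. (F r - c)\<^sup>2)" by (intro continuous_intros)
  have int: "(\<lambda>r. (F r - c)\<^sup>2) integrable_on {q..q'}" if "0 \<le> q" "q' \<le> t" for q q'
    using that by (intro integrable_continuous_interval continuous_on_subset[OF G]) auto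
  have p_bounds: "0 \<le> p" "p + L/4 \<le> t" using p a by auto
  have sq: "(\<delta> * L / 4)\<^sup>2 \<le> (F r - c)\<^sup>2" if "r \<in> {p..p + L/4}" for r
    using power_mono[OF far[OF that], of 2] \<open>0 < \<delta>\<close> a by simp
  have "\<delta>\<^sup>2 * L^3 / 64 = integral {p..p + L/4} (\<lambda>_. (\<delta> * L / 4)\<^sup>2)"
    using a by (simp add: power2_eq_square power3_eq_cube)
  also have "\<dots> \<le> integral {p..p + L/4} (\<lambda>r. (F r - c)\<^sup>2)"
    using p_bounds sq by (intro integral_le int) auto
  also have "\<dots> \<le> integral {0..t} (\<lambda>r. (F r - c)\<^sup>2)"
    using p_bounds by (intro integral_subset_le int) auto
  finally show ?thesis unfolding F_def .
qed

lemma periodic_shift_int: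
  fixes p :: real
  assumes per: "\<And>x. h (x + p) = h x"
  shows "h (x + p * of_int k) = h x"
proof -
  have nat: "h (y + p * real n) = h y" for y n
  proof (induction n)
    case 0
    then show ?case by simp
  next
    case (Suc n)
    have "h (y + p * real (Suc n)) = h ((y + p * real n) + p)" by (simp add: algebra_simps)
    then show ?case using per Suc.IH by simp
  qed
  show ?thesis
  proof (cases "0 \<le> k")
    case True
    then show ?thesis using nat[of x "nat k"] by simp
  next
    case False
    then show ?thesis using nat[of "x + p * of_int k" "nat (- k)"] by simp
  qed
qed

lemma periodic_representative:
  fixes p :: real
  assumes "0 < p" and per: "\<And>x. h (x + p) = h x"
  obtains x' where "x' \<in> {0..p}" "h x' = h x"
proof
  let ?x' = "x - p * of_int \<lfloor>x / p\<rfloor>"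
  have "?x' = p * frac (x / p)" using \<open>0 < p\<close> by (simp add: frac_def field_simps)
  then show "?x' \<in> {0..p}"
    using frac_lt_1[of "x / p"] frac_ge_0[of "x / p"] \<open>0 < p\<close> by auto
  show "h ?x' = h x" using periodic_shift_int[of h p x "- \<lfloor>x / p\<rfloor>"] per by simp
qed

lemma periodic_continuous_bounded:
  fixes h :: "real \<Rightarrow> 'b::real_normed_vector"
  assumes "0 < p" "\<And>x. h (x + p) = h x" "continuous_on UNIV h"
  obtains K where "\<And>x. norm (h x) \<le> K"
proof -
  have "compact (h ` {0..p})" by (intro compact_continuous_image continuous_on_subset[OF assms(3)]) auto
  then obtain K where K: "\<forall>y\<in>h ` {0..p}. norm y \<le> K" using compact_imp_bounded bounded_iff by metis
  have "norm (h x) \<le> K" for x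
  proof -
    obtain x' where "x' \<in> {0..p}" "h x' = h x" using periodic_representative[of p h x] assms(1,2) by blast
    then show ?thesis using K by (metis image_eqI)
  qed
  then show ?thesis using that by blast
qed

lemma infdist_translate_le:
  fixes A :: "'a::real_normed_vector set"
  assumes "\<And>a. a \<in> A \<Longrightarrow> a + c \<in> A"
  shows "infdist (x + c) A \<le> infdist x A"
proof (cases "A = {}")
  case True
  then show ?thesis by (simp add: infdist_def)
next
  case False
  have "infdist (x + c) A \<le> dist x a" if "a \<in> A" for a
    using infdist_le[OF assms[OF that], of "x + c"] by simp
  then show ?thesis unfolding infdist_notempty[OF False] by (intro cINF_greatest False) auto
qed

lemma infdist_zeros_periodic:
  fixes f :: "real \<Rightarrow> real"
  assumes per: "\<And>x. f (x + p) = f x"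
  shows "infdist (x + p) {x. f x = 0} = infdist x {x. f x = 0}"
proof (rule antisym)
  show "infdist (x + p) {x. f x = 0} \<le> infdist x {x. f x = 0}"
    by (rule infdist_translate_le) (simp add: per)
  have "f (a - p) = f a" for a using per[of "a - p"] by simp
  then have "infdist (x + p + - p) {x. f x = 0} \<le> infdist (x + p) {x. f x = 0}"
    by (intro infdist_translate_le) simp
  then show "infdist x {x. f x = 0} \<le> infdist (x + p) {x. f x = 0}" by simp
qed

text \<open>By periodicity the infimum of \<bar>f\<bar> away from its zeros is attained on one compact period.\<close>

lemma periodic_bounded_away_from_zeros:
  fixes f :: "real \<Rightarrow> real"
  assumes "0 < p" and per: "\<And>x. f (x + p) = f x" and cont: "continuous_on UNIV f" and "0 < e"
  obtains \<delta> where "0 < \<delta>" "\<And>x. e \<le> infdist x {x. f x = 0} \<Longrightarrow> \<delta> \<le> \<bar>f x\<bar>"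
proof -
  define A where "A = {x. f x = 0}"
  define P where "P = {0..p} \<inter> {x. e \<le> infdist x A}"
  have rep: "\<exists>x'\<in>P. f x' = f x" if "e \<le> infdist x A" for x
  proof -
    have "(f (y + p), infdist (y + p) A) = (f y, infdist y A)" for y
      using per infdist_zeros_periodic[of f p y, OF per] by (simp add: A_def)
    then obtain x' where "x' \<in> {0..p}" "(f x', infdist x' A) = (f x, infdist x A)"
      using periodic_representative[of p "\<lambda>x. (f x, infdist x A)" x] \<open>0 < p\<close> by blast
    then show ?thesis using that by (auto simp: P_def)
  qed
  show ?thesis
  proof (cases "P = {}")
    case True
    then have "\<not> e \<le> infdist x A" for x using rep by blast
    then show ?thesis by (intro that[of 1]) (auto simp: A_def)
  next
    case False
    have "compact P" unfolding P_def by (intro compact_Int_closed closed_Collect_le continuous_intros) auto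
    then obtain xs where xs: "xs \<in> P" "\<And>y. y \<in> P \<Longrightarrow> \<bar>f xs\<bar> \<le> \<bar>f y\<bar>"
      using continuous_attains_inf[OF _ False, of "\<lambda>x. \<bar>f x\<bar>"] continuous_on_subset[OF cont]
      by (metis continuous_on_rabs subset_UNIV)
    show ?thesis
    proof (rule that[of "\<bar>f xs\<bar>"])
      show "0 < \<bar>f xs\<bar>"
      proof (rule ccontr)
        assume "\<not> 0 < \<bar>f xs\<bar>"
        then have "infdist xs A = 0" by (simp add: A_def)
        then show False using xs(1) \<open>0 < e\<close> by (simp add: P_def)
      qed
    next
      fix x assume "e \<le> infdist x {x. f x = 0}"
      then obtain x' where "x' \<in> P" "f x' = f x" using rep by (auto simp: A_def)
      then show "\<bar>f xs\<bar> \<le> \<bar>f x\<bar>" using xs(2) by metis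
    qed
  qed
qed

lemma deriv_periodic:
  fixes g :: "real \<Rightarrow> real"
  assumes "\<And>x. g differentiable (at x)" and per: "\<And>x. g (x + p) = g x"
  shows "deriv g (x + p) = deriv g x"
proof -
  have "(g has_real_derivative deriv g (x + p)) (at (x + p))"
    using assms(1) by (simp add: DERIV_deriv_iff_real_differentiable)
  then have "((\<lambda>x. g (x + p)) has_real_derivative deriv g (x + p)) (at x)"
    by (simp add: DERIV_shift)
  then show ?thesis using per by (simp add: DERIV_imp_deriv)
qed

text \<open>Markov's inequality for the 2q-th moment; the constant is the 2q-th moment of a standard
  Gaussian.\<close>

lemma std_BM_increment_tail:
  assumes BM: "std_BM M B" and st: "0 \<le> s" "s < t" and b: "0 < b"
  shows "measure M {\<omega>\<in>space M. b \<le> \<bar>B t \<omega> - B s \<omega>\<bar>}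
     \<le> fact (2*q) / (2^q * fact q) * (t - s)^q / b^(2*q)"
proof -
  define Z where "Z = (\<lambda>\<omega>. B t \<omega> - B s \<omega>)"
  define \<sigma> where "\<sigma> = sqrt (t - s)"
  have sp: "\<sigma> > 0" using st by (simp add: \<sigma>_def)
  interpret prob_space M using BM by (simp add: std_BM_def)
  have D: "distributed M lborel Z (\<lambda>x. ennreal (normal_density 0 \<sigma> x))"
    using BM st unfolding std_BM_def Z_def \<sigma>_def by auto
  have mZ[measurable]: "Z \<in> borel_measurable M"
    using distributed_measurable[OF D] by simp
  have hb: "has_bochner_integral lborel (\<lambda>x. normal_density 0 \<sigma> x * (x - 0) ^ (2 * q)) (fact (2 * q) / ((2 / \<sigma>\<^sup>2)^q * fact q))"
    by (rule normal_moment_even[OF sp])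
  have il: "integrable lborel (\<lambda>x. normal_density 0 \<sigma> x * x ^ (2 * q))"
    using hb by (simp add: has_bochner_integral_iff)
  have iM: "integrable M (\<lambda>\<omega>. Z \<omega> ^ (2*q))"
    using distributed_integrable[OF D, of "\<lambda>x. x ^ (2*q)"] il by simp
  have eq: "(\<integral>\<omega>. Z \<omega> ^ (2*q) \<partial>M) = fact (2 * q) / ((2 / \<sigma>\<^sup>2)^q * fact q)"
    using distributed_integral[OF D, of "\<lambda>x. x ^ (2*q)"] has_bochner_integral_integral_eq[OF hb] by simp
  have s2: "\<sigma>\<^sup>2 = t - s" using st by (simp add: \<sigma>_def)
  have val: "fact (2 * q) / ((2 / \<sigma>\<^sup>2)^q * fact q) = fact (2*q) / (2^q * fact q) * (t - s)^q"
    using st by (simp add: s2 power_divide field_simps)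
  have sub: "{\<omega>\<in>space M. b \<le> \<bar>B t \<omega> - B s \<omega>\<bar>} \<subseteq> {\<omega>\<in>space M. b^(2*q) \<le> Z \<omega> ^ (2*q)}"
  proof
    fix \<omega> assume "\<omega> \<in> {\<omega>\<in>space M. b \<le> \<bar>B t \<omega> - B s \<omega>\<bar>}"
    then have "\<omega> \<in> space M" "b \<le> \<bar>Z \<omega>\<bar>" by (auto simp: Z_def)
    then have "b^(2*q) \<le> \<bar>Z \<omega>\<bar>^(2*q)" using b by (intro power_mono) auto
    also have "\<bar>Z \<omega>\<bar>^(2*q) = Z \<omega> ^ (2*q)" by (simp add: power_even_abs)
    finally show "\<omega> \<in> {\<omega>\<in>space M. b^(2*q) \<le> Z \<omega> ^ (2*q)}" using \<open>\<omega> \<in> space M\<close> by simp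
  qed
  have "measure M {\<omega>\<in>space M. b \<le> \<bar>B t \<omega> - B s \<omega>\<bar>} \<le> measure M {\<omega>\<in>space M. b^(2*q) \<le> Z \<omega> ^ (2*q)}"
    by (rule finite_measure_mono[OF sub]) measurable
  also have "\<dots> \<le> (\<integral>\<omega>. Z \<omega> ^ (2*q) \<partial>M) / b^(2*q)"
    by (rule integral_Markov_inequality_measure[OF iM, where A="space M"]) (use b in auto)
  finally show ?thesis using eq val by simp
qed

lemma dyadic_level_bound_eq:
  fixes t \<beta> \<theta> :: real and m i r :: nat
  assumes "0 < t" "0 < \<beta>" "0 < \<theta>"
  shows "2^(m+i) * (t / 2^(m+i))^(Suc (3*r)) / (\<beta> * \<theta>^i)^(2 * Suc (3*r))
    = (t / \<beta>^2)^(Suc (3*r)) * ((1/2)^(3*m))^r * (2 / (2*\<theta>^2)^(Suc (3*r)))^i"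
proof -
  define q where "q = Suc (3*r)"
  have L: "2^(m+i) * (t / 2^(m+i))^q / (\<beta> * \<theta>^i)^(2 * q) = t^q / (2^(m+i))^(3*r) / (\<beta>^(2*q) * (\<theta>^i)^(2*q))"
    by (simp add: q_def power_divide power_mult_distrib)
  have R: "(t / \<beta>^2)^q * ((1/2)^(3*m))^r * (2 / (2*\<theta>^2)^q)^i = t^q / \<beta>^(2*q) / 2^(3*m*r) * (2^i / (2^(q*i) * \<theta>^(2*q*i)))"
    by (simp add: power_divide power_mult_distrib power_mult[symmetric] mult.commute mult.left_commute)
  have e: "(2::real)^(q*i) = 2^i * 2^(3*r*i)" by (simp add: q_def power_add[symmetric])
  have e2: "(2::real)^((m+i)*(3*r)) = 2^(3*m*r) * 2^(3*r*i)" by (simp add: power_add[symmetric] algebra_simps)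
  have e3: "(\<theta>^i)^(2*q) = \<theta>^(2*q*i)" by (simp add: power_mult[symmetric] mult.commute)
  show ?thesis unfolding q_def[symmetric] L R using assms
    by (simp add: e e2 e3 field_simps power_mult[symmetric]) (simp add: q_def power_add[symmetric] algebra_simps)
qed

text \<open>The thresholds at level m + i decay like (7/8)^i, more slowly than the typical size
  2^(-i/2) of increments at that level, so the event is rare; yet they are summable, which is what
  the chaining argument needs.\<close>

definition large_dyadic_increments_at :: "'a measure \<Rightarrow> (real \<Rightarrow> 'a \<Rightarrow> real) \<Rightarrow> real \<Rightarrow> nat \<Rightarrow> real \<Rightarrow> 'a set" where
  "large_dyadic_increments_at M B t k b =
     (\<Union>j<2^k. {\<omega>\<in>space M. b \<le> \<bar>B (t * (real (Suc j) / 2^k)) \<omega> - B (t * (real j / 2^k)) \<omega>\<bar>})"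

definition large_dyadic_increments :: "'a measure \<Rightarrow> (real \<Rightarrow> 'a \<Rightarrow> real) \<Rightarrow> real \<Rightarrow> nat \<Rightarrow> real \<Rightarrow> 'a set" where
  "large_dyadic_increments M B t m \<beta> = (\<Union>i. large_dyadic_increments_at M B t (m + i) (\<beta> * (7/8)^i))"

lemma large_dyadic_increments_at_measure:
  assumes BM: "std_BM M B" and "0 < t" "0 < b"
  shows "large_dyadic_increments_at M B t k b \<in> sets M"
    "measure M (large_dyadic_increments_at M B t k b)
       \<le> 2^k * (fact (2*q) / (2^q * fact q) * (t / 2^k)^q / b^(2*q))"
proof -
  interpret prob_space M using BM by (simp add: std_BM_def)
  define E where "E j = {\<omega>\<in>space M. b \<le> \<bar>B (t * (real (Suc j) / 2^k)) \<omega> - B (t * (real j / 2^k)) \<omega>\<bar>}" for j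
  have [measurable]: "B (t * (real j / 2^k)) \<in> borel_measurable M" for j
    using BM \<open>0 < t\<close> by (simp add: std_BM_def)
  have E: "E j \<in> sets M" for j unfolding E_def by measurable
  then show "large_dyadic_increments_at M B t k b \<in> sets M"
    unfolding large_dyadic_increments_at_def E_def[symmetric] by auto
  define C where "C = fact (2*q) / (2^q * fact q) * (t / 2^k)^q / b^(2*q)"
  have Ej: "measure M (E j) \<le> C" for j
  proof -
    have "t * (real (Suc j) / 2^k) - t * (real j / 2^k) = t / 2^k" by (simp add: field_simps)
    then show ?thesis
      using std_BM_increment_tail[OF BM _ _ \<open>0 < b\<close>, of "t * (real j / 2^k)" "t * (real (Suc j) / 2^k)" q]
        \<open>0 < t\<close> by (simp add: E_def C_def field_simps)
  qed
  have "measure M (\<Union>j<2^k. E j) \<le> (\<Sum>j<2^k. measure M (E j))"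
    by (rule finite_measure_subadditive_finite) (use E in auto)
  also have "\<dots> \<le> (\<Sum>j<(2::nat)^k. C)" by (intro sum_mono Ej)
  also have "\<dots> = 2^k * C" by simp
  finally show "measure M (large_dyadic_increments_at M B t k b)
       \<le> 2^k * (fact (2*q) / (2^q * fact q) * (t / 2^k)^q / b^(2*q))"
    unfolding large_dyadic_increments_at_def E_def[symmetric] C_def .
qed

lemma seven_eighths_ratio_le_half:
  assumes "1 \<le> r"
  shows "2 / (2 * (7/8)^2) ^ Suc (3*r) \<le> (1/2::real)"
proof -
  have "(4::real) \<le> (49/32)^4" by (simp add: power_divide)
  also have "\<dots> \<le> (49/32) ^ Suc (3*r)" using assms by (intro power_increasing) auto
  finally have "4 \<le> (2 * (7/8)^2 :: real) ^ Suc (3*r)" by (simp add: power2_eq_square)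
  then show ?thesis by (simp add: divide_le_eq del: power_Suc)
qed

lemma large_dyadic_increments_measure:
  assumes BM: "std_BM M B" and t: "0 < t" and b: "0 < \<beta>" and r: "1 \<le> r"
  defines "q \<equiv> Suc (3*r)"
  shows "large_dyadic_increments M B t m \<beta> \<in> sets M"
    "measure M (large_dyadic_increments M B t m \<beta>)
       \<le> 2 * (fact (2*q) / (2^q * fact q)) * (t / \<beta>^2)^q * ((1/2)^(3*m))^r"
proof -
  interpret prob_space M using BM by (simp add: std_BM_def)
  define cq :: real where "cq = fact (2*q) / (2^q * fact q)"
  define \<rho> :: real where "\<rho> = 2 / (2*(7/8)^2)^q"
  define A where "A i = large_dyadic_increments_at M B t (m + i) (\<beta> * (7/8)^i)" for i
  define T where "T i = cq * (t / \<beta>^2)^q * ((1/2)^(3*m))^r * \<rho>^i" for i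
  have A: "A i \<in> sets M" for i
    unfolding A_def using large_dyadic_increments_at_measure(1)[OF BM t] b by simp
  then show "large_dyadic_increments M B t m \<beta> \<in> sets M"
    unfolding large_dyadic_increments_def A_def[symmetric] by auto
  have AT: "measure M (A i) \<le> T i" for i
  proof -
    have "measure M (A i) \<le> cq * (2^(m+i) * (t / 2^(m+i))^q / (\<beta> * (7/8)^i)^(2*q))"
      using large_dyadic_increments_at_measure(2)[OF BM t, of "\<beta> * (7/8)^i" "m + i" q] b
      by (simp add: A_def cq_def mult.left_commute)
    also have "\<dots> = T i"
      unfolding T_def q_def \<rho>_def using dyadic_level_bound_eq[OF t b, of "7/8" m i r] by simp
    finally show ?thesis .
  qed
  have \<rho>: "0 \<le> \<rho>" "\<rho> \<le> 1/2"
    using seven_eighths_ratio_le_half[OF r] by (simp_all add: \<rho>_def q_def)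
  have sT: "summable T" unfolding T_def
    by (intro summable_mult summable_geometric) (use \<rho> in simp)
  have sA: "summable (\<lambda>i. measure M (A i))"
    by (rule summable_comparison_test'[OF sT, of 0]) (use AT in simp)
  have "measure M (\<Union>i. A i) \<le> (\<Sum>i. measure M (A i))"
    by (rule finite_measure_subadditive_countably) (use A sA in auto)
  also have "\<dots> \<le> (\<Sum>i. T i)" by (rule suminf_le[OF AT sA sT])
  also have "\<dots> = cq * (t / \<beta>^2)^q * ((1/2)^(3*m))^r * (1 / (1 - \<rho>))"
    unfolding T_def using \<rho> by (simp add: suminf_mult suminf_geometric)
  also have "\<dots> \<le> cq * (t / \<beta>^2)^q * ((1/2)^(3*m))^r * 2"
    by (rule mult_left_mono) (use \<rho> t b in \<open>auto simp: cq_def field_simps\<close>)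
  finally show "measure M (large_dyadic_increments M B t m \<beta>)
       \<le> 2 * (fact (2*q) / (2^q * fact q)) * (t / \<beta>^2)^q * ((1/2)^(3*m))^r"
    unfolding large_dyadic_increments_def A_def[symmetric] by (simp add: cq_def ac_simps)
qed

lemma sum_seven_eighths_powers_le: "(\<Sum>k\<in>{m<..n}. (7/8::real)^(k-m)) \<le> 7"
proof (cases "m \<le> n")
  case True
  then have "(\<Sum>k\<in>{m<..n}. (7/8::real)^(k-m)) \<le> 7 * (1 - (7/8)^(n-m))"
  proof (induction n rule: dec_induct)
    case base
    then show ?case by simp
  next
    case (step n)
    have "{m<..Suc n} = insert (Suc n) {m<..n}" using step by auto
    then show ?case using step by (simp add: Suc_diff_le)
  qed
  also have "\<dots> \<le> 7" by simp
  finally show ?thesis .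
qed simp

lemma increment_le_off_large_dyadic_increments:
  assumes cont: "continuous_on {0..} (\<lambda>s. B s \<omega>)" and t: "0 < t" and b: "0 < \<beta>"
    and \<omega>: "\<omega> \<in> space M" and nE: "\<omega> \<notin> large_dyadic_increments M B t m \<beta>"
    and s: "s \<in> {0..t}" "s' \<in> {0..t}" and ss: "\<bar>s - s'\<bar> \<le> t / 2^m"
  shows "\<bar>B s \<omega> - B s' \<omega>\<bar> \<le> 15 * \<beta>"
proof -
  define g where "g x = B (t * x) \<omega>" for x
  have gc: "continuous_on {0..1} g" unfolding g_def
    by (rule continuous_on_compose2[OF cont, of _ "\<lambda>x. t * x"]) (use t in \<open>auto intro!: continuous_intros\<close>)
  have inc: "\<bar>g (real (Suc j) / 2^k) - g (real j / 2^k)\<bar> \<le> \<beta> * (7/8)^(k-m)" if "m \<le> k" "j < 2^k" for k j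
  proof -
    have "\<omega> \<notin> large_dyadic_increments_at M B t k (\<beta> * (7/8)^(k-m))"
      using nE \<open>m \<le> k\<close> unfolding large_dyadic_increments_def by (metis le_add_diff_inverse UNIV_I UN_I)
    then have "\<not> \<beta> * (7/8)^(k-m) \<le> \<bar>B (t * (real (Suc j) / 2^k)) \<omega> - B (t * (real j / 2^k)) \<omega>\<bar>"
      using \<omega> \<open>j < 2^k\<close> unfolding large_dyadic_increments_at_def by blast
    then show ?thesis unfolding g_def by simp
  qed
  have S: "(\<Sum>k\<in>{m<..n}. \<beta> * (7/8)^(k-m)) \<le> 7 * \<beta>" for n
    using sum_seven_eighths_powers_le[of m n] b by (simp add: sum_distrib_left[symmetric] mult.commute)
  have "\<bar>s/t - s'/t\<bar> = \<bar>s - s'\<bar> / t" using t by (simp add: diff_divide_distrib[symmetric] abs_divide)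
  also have "\<dots> \<le> 1 / 2^m" using ss t by (simp add: divide_le_eq field_simps)
  finally have "\<bar>g (s/t) - g (s'/t)\<bar> \<le> \<beta> * (7/8)^(m-m) + 2 * (7 * \<beta>)"
    by (intro dyadic_chaining[OF gc inc S]) (use s t in auto)
  then show ?thesis unfolding g_def using t by simp
qed

lemma exists_power_one_eighth_between:
  fixes \<mu> :: real assumes "0 < \<mu>" "\<mu> < 1"
  shows "\<exists>m. \<mu> < (1/8)^m \<and> (1/8)^m \<le> 8 * \<mu>"
proof -
  have ex: "\<exists>n. (1/8::real)^n \<le> \<mu>"
    using real_arch_pow_inv[of \<mu> "1/8"] assms by (auto intro: less_imp_le)
  define n0 where "n0 = (LEAST n. (1/8::real)^n \<le> \<mu>)"
  have n0: "(1/8::real)^n0 \<le> \<mu>" unfolding n0_def by (rule LeastI_ex[OF ex])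
  have "n0 \<noteq> 0" proof assume "n0 = 0" then show False using n0 assms by simp qed
  then obtain m where m: "n0 = Suc m" by (cases n0) auto
  have "\<not> (1/8::real)^m \<le> \<mu>" using not_less_Least[of m "\<lambda>n. (1/8::real)^n \<le> \<mu>"] m unfolding n0_def by simp
  moreover have "(1/8::real)^m \<le> 8 * \<mu>" using n0 m by simp
  ultimately show ?thesis by (intro exI[of _ m]) simp
qed

lemma detM_ge_if_path_leaves:
  fixes u :: "real \<Rightarrow> real" and A :: "real set"
  assumes cont: "continuous_on UNIV (deriv u)" and "0 < \<delta>"
    and far: "\<And>x. \<eta>/2 \<le> infdist x A \<Longrightarrow> \<delta> \<le> \<bar>deriv u x\<bar>"
    and path: "continuous_on {0..} (\<lambda>s. B s \<omega>)" and "0 < t" "0 < \<nu>" "0 < \<eta>"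
    and \<omega>: "\<omega> \<in> space M" and small: "\<omega> \<notin> large_dyadic_increments M B t m (\<eta> / (30 * sqrt \<nu>))"
    and s0: "s0 \<in> {0..t}" "\<eta> < infdist (y + sqrt \<nu> * B s0 \<omega>) A"
  shows "\<delta>\<^sup>2 * (t / 2^m)^3 / 64 \<le> detM u B \<nu> t y \<omega>"
proof -
  define L where "L = t / 2^m"
  define a where "a = max 0 (s0 - L)"
  have "0 < L" "L \<le> t" using \<open>0 < t\<close> by (auto simp: L_def divide_le_eq)
  then have a: "0 \<le> a" "a + L \<le> t" using s0 by (auto simp: a_def)
  have near: "\<delta> \<le> \<bar>deriv u (y + sqrt \<nu> * B s \<omega>)\<bar>" if s: "s \<in> {a..a + L}" for s
  proof -
    have "\<bar>B s \<omega> - B s0 \<omega>\<bar> \<le> 15 * (\<eta> / (30 * sqrt \<nu>))"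
      using s s0 a \<open>0 < \<nu>\<close> \<open>0 < \<eta>\<close>
      by (intro increment_le_off_large_dyadic_increments[OF path \<open>0 < t\<close> _ \<omega> small])
        (auto simp: a_def L_def)
    then have "sqrt \<nu> * \<bar>B s \<omega> - B s0 \<omega>\<bar> \<le> \<eta> / 2"
      using \<open>0 < \<nu>\<close> mult_left_mono[of _ _ "sqrt \<nu>"] by fastforce
    then have "dist (y + sqrt \<nu> * B s0 \<omega>) (y + sqrt \<nu> * B s \<omega>) \<le> \<eta> / 2"
      using \<open>0 < \<nu>\<close> by (simp add: dist_real_def abs_mult abs_minus_commute flip: right_diff_distrib)
    then have "\<eta> / 2 \<le> infdist (y + sqrt \<nu> * B s \<omega>) A"
      using infdist_triangle[of "y + sqrt \<nu> * B s0 \<omega>" A "y + sqrt \<nu> * B s \<omega>"] s0(2) by linarith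
    then show ?thesis by (rule far)
  qed
  have "continuous_on {0..t} (\<lambda>s. deriv u (y + sqrt \<nu> * B s \<omega>))"
    by (intro continuous_on_compose2[OF cont] continuous_intros continuous_on_subset[OF path]) auto
  from integral_sq_tail_integral_ge[OF this a \<open>0 < L\<close> \<open>0 < \<delta>\<close> near]
  show ?thesis unfolding detM_def L_def .
qed

lemma det_le_diff_near_subset_large_dyadic_increments:
  fixes u :: "real \<Rightarrow> real" and A :: "real set"
  assumes BM: "std_BM M B" and cont: "continuous_on UNIV (deriv u)" and "0 < \<delta>"
    and far: "\<And>x. \<eta>/2 \<le> infdist x A \<Longrightarrow> \<delta> \<le> \<bar>deriv u x\<bar>"
    and "0 < t" "0 < \<nu>" "0 < \<eta>" and small: "\<theta> < \<delta>\<^sup>2 * (t / 2^m)^3 / 64"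
  shows "{\<omega> \<in> space M. detM u B \<nu> t y \<omega> \<le> \<theta>}
           - {\<omega> \<in> space M. \<forall>s\<in>{0..t}. infdist (y + sqrt \<nu> * B s \<omega>) A \<le> \<eta>}
         \<subseteq> large_dyadic_increments M B t m (\<eta> / (30 * sqrt \<nu>))"
proof
  fix \<omega>
  assume "\<omega> \<in> {\<omega> \<in> space M. detM u B \<nu> t y \<omega> \<le> \<theta>}
           - {\<omega> \<in> space M. \<forall>s\<in>{0..t}. infdist (y + sqrt \<nu> * B s \<omega>) A \<le> \<eta>}"
  then obtain s0 where \<omega>: "\<omega> \<in> space M" "detM u B \<nu> t y \<omega> \<le> \<theta>"
    and s0: "s0 \<in> {0..t}" "\<eta> < infdist (y + sqrt \<nu> * B s0 \<omega>) A"
    by (auto simp: not_le)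
  have path: "continuous_on {0..} (\<lambda>s. B s \<omega>)" using BM \<omega> by (simp add: std_BM_def)
  show "\<omega> \<in> large_dyadic_increments M B t m (\<eta> / (30 * sqrt \<nu>))"
  proof (rule ccontr)
    assume "\<omega> \<notin> large_dyadic_increments M B t m (\<eta> / (30 * sqrt \<nu>))"
    with \<omega> s0 have "\<delta>\<^sup>2 * (t / 2^m)^3 / 64 \<le> detM u B \<nu> t y \<omega>"
      using \<open>0 < t\<close> \<open>0 < \<nu>\<close> \<open>0 < \<eta>\<close>
      by (intro detM_ge_if_path_leaves[where B = B and \<omega> = \<omega>, OF cont \<open>0 < \<delta>\<close> far path]) auto
    then show False using \<omega> small by simp
  qed
qed

lemma large_dyadic_increments_measure_le_powr:
  assumes BM: "std_BM M B" and "0 < \<nu>" "0 < t" "t * \<nu> \<le> 1" "0 < \<eta>"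
    and r: "1 \<le> r" "p \<le> real r" and \<epsilon>: "0 < \<epsilon>" "\<epsilon> \<le> 1"
    and m: "(1/8)^m \<le> c * \<epsilon>"
  defines "q \<equiv> Suc (3*r)"
  shows "measure M (large_dyadic_increments M B t m (\<eta> / (30 * sqrt \<nu>)))
    \<le> 2 * (fact (2*q) / (2^q * fact q)) * (900 / \<eta>^2)^q * c^r * \<epsilon> powr p"
proof -
  define cq :: real where "cq = fact (2*q) / (2^q * fact q)"
  define \<beta> where "\<beta> = \<eta> / (30 * sqrt \<nu>)"
  have "0 < \<beta>" using \<open>0 < \<eta>\<close> \<open>0 < \<nu>\<close> by (simp add: \<beta>_def)
  have "t / \<beta>^2 = 900 * (t * \<nu>) / \<eta>^2"
    using \<open>0 < \<nu>\<close> \<open>0 < \<eta>\<close> by (simp add: \<beta>_def power_mult_distrib power_divide field_simps)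
  then have t\<beta>: "0 \<le> t / \<beta>^2" "t / \<beta>^2 \<le> 900 / \<eta>^2"
    using \<open>0 < t\<close> \<open>0 < \<nu>\<close> \<open>t * \<nu> \<le> 1\<close> by (simp_all add: divide_right_mono)
  have m8: "0 \<le> (1/2::real)^(3*m)" "(1/2::real)^(3*m) \<le> c * \<epsilon>"
    using m by (simp_all add: power_mult power_divide)
  have "measure M (large_dyadic_increments M B t m \<beta>) \<le> 2 * cq * (t / \<beta>^2)^q * ((1/2)^(3*m))^r"
    unfolding cq_def q_def by (rule large_dyadic_increments_measure(2)[OF BM \<open>0 < t\<close> \<open>0 < \<beta>\<close> r(1)])
  also have "\<dots> \<le> 2 * cq * (900 / \<eta>^2)^q * (c * \<epsilon>)^r"
    using t\<beta> m8 by (intro mult_mono mult_left_mono power_mono) (auto simp: cq_def)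
  also have "\<dots> = 2 * cq * (900 / \<eta>^2)^q * c^r * \<epsilon>^r" by (simp add: power_mult_distrib)
  also have "\<dots> \<le> 2 * cq * (900 / \<eta>^2)^q * c^r * \<epsilon> powr p"
  proof -
    have "0 < c * \<epsilon>" using m by (rule less_le_trans[rotated]) simp
    then have "0 \<le> c" using \<open>0 < \<epsilon>\<close> by (simp add: zero_less_mult_iff)
    moreover have "\<epsilon>^r \<le> \<epsilon> powr p" using powr_mono'[OF r(2), of \<epsilon>] \<epsilon> by (simp add: powr_realpow)
    ultimately show ?thesis by (intro mult_left_mono) (auto simp: cq_def)
  qed
  finally show ?thesis unfolding cq_def \<beta>_def .
qed

lemma det_small_implies_path_near:
  fixes u :: "real \<Rightarrow> real" and A :: "real set"
  assumes BM: "std_BM M B" and cont: "continuous_on UNIV (deriv u)" and "0 < \<delta>"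
    and far: "\<And>x. \<eta>/2 \<le> infdist x A \<Longrightarrow> \<delta> \<le> \<bar>deriv u x\<bar>"
    and "0 < \<eta>" "0 < vt" "0 < \<omega>'"
  shows "implies_eps M
     (\<lambda>(\<nu>, t, y) \<epsilon>. {\<omega> \<in> space M. detM u B \<nu> t y \<omega> \<le> \<epsilon> * vt * t powr (\<omega>' + 3) * \<nu> powr \<omega>'})
     (\<lambda>(\<nu>, t, y) \<epsilon>. {\<omega> \<in> space M. \<forall>s\<in>{0..t}. infdist (y + sqrt \<nu> * B s \<omega>) A \<le> \<eta>})
     {(\<nu>, t, y). 0 < \<nu> \<and> \<nu> \<le> 1 \<and> 0 < t \<and> t \<le> 1 / \<nu>}"
    (is "implies_eps M ?A ?B ?Z")
  unfolding implies_eps_def almost_false_def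
proof (intro allI impI)
  fix p :: real
  assume "0 < p"
  define r where "r = nat \<lceil>p\<rceil> + 1"
  define \<Lambda> where "\<Lambda> = 64 * vt / \<delta>^2"
  define q where "q = Suc (3*r)"
  define cq :: real where "cq = fact (2*q) / (2^q * fact q)"
  define K where "K = 2 * cq * (900 / \<eta>^2)^q * (8 * \<Lambda>)^r"
  define \<epsilon>0 where "\<epsilon>0 = min 1 (1 / (2 * \<Lambda>))"
  have r: "1 \<le> r" "p \<le> real r" unfolding r_def by linarith+
  have \<Lambda>: "0 < \<Lambda>" using \<open>0 < vt\<close> \<open>0 < \<delta>\<close> by (simp add: \<Lambda>_def)
  have "0 \<le> cq" by (simp add: cq_def)
  then have "0 \<le> K" using \<Lambda> by (simp add: K_def)
  show "\<exists>C \<epsilon>0. C > 0 \<and> \<epsilon>0 > 0 \<and> (\<forall>\<zeta>\<in>?Z. \<forall>\<epsilon>. 0 < \<epsilon> \<and> \<epsilon> \<le> \<epsilon>0 \<longrightarrow>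
           (\<exists>E\<in>sets M. ?A \<zeta> \<epsilon> - ?B \<zeta> \<epsilon> \<subseteq> E \<and> measure M E \<le> C * \<epsilon> powr p))"
  proof (rule exI[of _ "K + 1"], rule exI[of _ \<epsilon>0], intro conjI ballI allI impI)
    show "0 < K + 1" "0 < \<epsilon>0" using \<open>0 \<le> K\<close> \<Lambda> by (simp_all add: \<epsilon>0_def)
    fix \<zeta> \<epsilon>
    assume "\<zeta> \<in> ?Z" "0 < \<epsilon> \<and> \<epsilon> \<le> \<epsilon>0"
    then obtain \<nu> t y where \<zeta>: "\<zeta> = (\<nu>, t, y)" and "0 < \<nu>" "0 < t" "t \<le> 1 / \<nu>" "0 < \<epsilon>" "\<epsilon> \<le> \<epsilon>0"
      by auto
    then have t\<nu>: "0 < t * \<nu>" "t * \<nu> \<le> 1" by (simp_all add: field_simps)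
    have \<epsilon>: "\<epsilon> \<le> 1" "\<Lambda> * \<epsilon> \<le> 1/2"
      using \<open>\<epsilon> \<le> \<epsilon>0\<close> \<Lambda> by (auto simp: \<epsilon>0_def field_simps)
    define \<mu> where "\<mu> = \<Lambda> * \<epsilon> * (t * \<nu>) powr \<omega>'"
    have "0 < (t * \<nu>) powr \<omega>'" "(t * \<nu>) powr \<omega>' \<le> 1"
      using t\<nu> \<open>0 < t\<close> \<open>0 < \<nu>\<close> \<open>0 < \<omega>'\<close> by (simp_all add: powr_le1)
    then have \<mu>: "0 < \<mu>" "\<mu> \<le> \<Lambda> * \<epsilon>"
      using \<Lambda> \<open>0 < \<epsilon>\<close> unfolding \<mu>_def by (auto intro!: mult_pos_pos mult_left_le)
    obtain m where m: "\<mu> < (1/8)^m" "(1/8::real)^m \<le> 8 * \<mu>"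
      using exists_power_one_eighth_between[of \<mu>] \<mu> \<epsilon> by auto
    define E where "E = large_dyadic_increments M B t m (\<eta> / (30 * sqrt \<nu>))"
    have "t powr (\<omega>' + 3) * \<nu> powr \<omega>' = t^3 * (t * \<nu>) powr \<omega>'"
      using \<open>0 < t\<close> \<open>0 < \<nu>\<close> by (simp add: powr_add powr_mult)
    then have "\<epsilon> * vt * t powr (\<omega>' + 3) * \<nu> powr \<omega>' = \<delta>\<^sup>2 * t^3 * \<mu> / 64"
      using \<open>0 < \<delta>\<close> unfolding \<mu>_def \<Lambda>_def by (simp add: field_simps)
    also have "\<dots> < \<delta>\<^sup>2 * t^3 * (1/8)^m / 64"
      using m \<open>0 < \<delta>\<close> \<open>0 < t\<close> by simp
    also have "\<dots> = \<delta>\<^sup>2 * (t / 2^m)^3 / 64"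
    proof -
      have "(2::real)^(m*3) = (2^3)^m" by (metis power_mult mult.commute)
      then show ?thesis by (simp add: power_divide power_mult[symmetric] mult.commute)
    qed
    finally have "?A \<zeta> \<epsilon> - ?B \<zeta> \<epsilon> \<subseteq> E"
      using det_le_diff_near_subset_large_dyadic_increments[OF BM cont \<open>0 < \<delta>\<close> far
          \<open>0 < t\<close> \<open>0 < \<nu>\<close> \<open>0 < \<eta>\<close>]
      unfolding \<zeta> E_def by simp
    moreover have "measure M E \<le> (K + 1) * \<epsilon> powr p"
    proof -
      have "(1/8::real)^m \<le> 8 * \<Lambda> * \<epsilon>" using m \<mu> by simp
      then have "measure M E \<le> K * \<epsilon> powr p" unfolding E_def K_def cq_def q_def
        by (rule large_dyadic_increments_measure_le_powr[OF BM \<open>0 < \<nu>\<close> \<open>0 < t\<close> t\<nu>(2) \<open>0 < \<eta>\<close> r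
            \<open>0 < \<epsilon>\<close> \<epsilon>(1)])
      also have "\<dots> \<le> (K + 1) * \<epsilon> powr p" by (simp add: distrib_right)
      finally show ?thesis .
    qed
    moreover have "E \<in> sets M"
      unfolding E_def using \<open>0 < \<eta>\<close> \<open>0 < \<nu>\<close>
      by (intro large_dyadic_increments_measure(1)[OF BM \<open>0 < t\<close> _ r(1)]) simp
    ultimately show "\<exists>E\<in>sets M. ?A \<zeta> \<epsilon> - ?B \<zeta> \<epsilon> \<subseteq> E \<and> measure M E \<le> (K + 1) * \<epsilon> powr p"
      by blast
  qed
qed

lemma det_small_implies_path_near_zeros:
  fixes u :: "real \<Rightarrow> real"
  assumes BM: "std_BM M B" and cont: "continuous_on UNIV (deriv u)"
    and per: "\<And>x. deriv u (x + 2 * pi) = deriv u x" and "0 < \<eta>" "0 < vt" "0 < \<omega>'"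
  shows "implies_eps M
     (\<lambda>(\<nu>, t, y) \<epsilon>. {\<omega> \<in> space M. detM u B \<nu> t y \<omega> \<le> \<epsilon> * vt * t powr (\<omega>' + 3) * \<nu> powr \<omega>'})
     (\<lambda>(\<nu>, t, y) \<epsilon>. {\<omega> \<in> space M. \<forall>s\<in>{0..t}. infdist (y + sqrt \<nu> * B s \<omega>) {x. deriv u x = 0} \<le> \<eta>})
     {(\<nu>, t, y). 0 < \<nu> \<and> \<nu> \<le> 1 \<and> 0 < t \<and> t \<le> 1 / \<nu>}"
proof -
  obtain \<delta> where "0 < \<delta>" and "\<And>x. \<eta>/2 \<le> infdist x {x. deriv u x = 0} \<Longrightarrow> \<delta> \<le> \<bar>deriv u x\<bar>"
    using periodic_bounded_away_from_zeros[of "2 * pi" "deriv u" "\<eta>/2"] per cont \<open>0 < \<eta>\<close> by auto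
  then show ?thesis
    using det_small_implies_path_near[where A = "{x. deriv u x = 0}", OF BM cont] assms(4-6) by blast
qed

lemma implies_eps_of_subset:
  assumes "\<And>\<zeta> \<epsilon>. \<zeta> \<in> Z \<Longrightarrow> A \<zeta> \<epsilon> \<subseteq> B \<zeta> \<epsilon>"
  shows "implies_eps M A B Z"
  unfolding implies_eps_def almost_false_def
  using assms by (intro allI impI exI[of _ 1]) (auto intro!: bexI[of _ "{}"])

lemma tdist_nonneg: "0 \<le> tdist x y"
  unfolding tdist_def by (rule cINF_greatest) auto

lemma tdist_le_abs: "tdist x y \<le> \<bar>x - y\<bar>"
proof -
  have "tdist x y \<le> \<bar>x - y - 2 * pi * real_of_int 0\<bar>"
    unfolding tdist_def by (rule cINF_lower) (auto intro: bdd_belowI[of _ 0])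
  then show ?thesis by simp
qed

lemma bounded_le_power_dist:
  fixes g :: "real \<Rightarrow> real"
  assumes K: "\<And>x. \<bar>g x\<bar> \<le> K" and "0 < \<eta>" "0 < c"
    and loc: "\<And>z. tdist z y0 \<le> \<eta> \<Longrightarrow> \<bar>g z\<bar> \<le> c * tdist z y0 ^ k"
  obtains C where "0 < C" "\<And>x. \<bar>g x\<bar> \<le> C * \<bar>x - y0\<bar> ^ k"
proof (rule that)
  define C where "C = max c (K / \<eta> ^ k)"
  show "0 < C" using \<open>0 < c\<close> by (simp add: C_def)
  fix x
  show "\<bar>g x\<bar> \<le> C * \<bar>x - y0\<bar> ^ k"
  proof (cases "tdist x y0 \<le> \<eta>")
    case True
    have "\<bar>g x\<bar> \<le> c * tdist x y0 ^ k" by (rule loc[OF True])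
    also have "\<dots> \<le> c * \<bar>x - y0\<bar> ^ k"
      using \<open>0 < c\<close> tdist_nonneg tdist_le_abs by (intro mult_left_mono power_mono) auto
    also have "\<dots> \<le> C * \<bar>x - y0\<bar> ^ k" by (intro mult_right_mono) (auto simp: C_def)
    finally show ?thesis .
  next
    case False
    then have "\<eta> \<le> \<bar>x - y0\<bar>" using tdist_le_abs[of x y0] by linarith
    have "\<bar>g x\<bar> \<le> K / \<eta> ^ k * \<eta> ^ k" using K[of x] \<open>0 < \<eta>\<close> by simp
    also have "\<dots> \<le> K / \<eta> ^ k * \<bar>x - y0\<bar> ^ k"
      using \<open>0 < \<eta>\<close> \<open>\<eta> \<le> \<bar>x - y0\<bar>\<close> K[of x]
      by (intro mult_left_mono power_mono) auto
    also have "\<dots> \<le> C * \<bar>x - y0\<bar> ^ k" by (intro mult_right_mono) (auto simp: C_def)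
    finally show ?thesis .
  qed
qed

lemma hfun_le_sup_power:
  fixes u :: "real \<Rightarrow> real"
  assumes bound: "\<And>x. \<bar>deriv (deriv u) x\<bar> \<le> c * \<bar>x - y0\<bar> ^ k" and "0 \<le> c"
    and path: "continuous_on {0..} (\<lambda>s. B s \<omega>)" and "0 \<le> t"
  shows "hfun u B y \<nu> t \<omega> \<le> c * (SUP s\<in>{0..t}. \<bar>y - y0 + sqrt \<nu> * B s \<omega>\<bar> ^ k)"
proof -
  define F where "F s = \<bar>y - y0 + sqrt \<nu> * B s \<omega>\<bar>" for s
  have "continuous_on {0..t} (\<lambda>s. F s ^ k)" unfolding F_def
    by (intro continuous_intros continuous_on_subset[OF path]) auto
  then have "bdd_above ((\<lambda>s. F s ^ k) ` {0..t})"
    by (intro bounded_imp_bdd_above compact_imp_bounded compact_continuous_image) auto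
  then have sup: "F s ^ k \<le> (SUP s\<in>{0..t}. F s ^ k)" if "s \<in> {0..t}" for s
    using that by (rule cSUP_upper2) simp
  show ?thesis unfolding hfun_def F_def[symmetric]
  proof (rule cSup_least)
    show "(\<lambda>(s, z, \<tau>). \<bar>deriv (deriv u) (y + sqrt \<nu> * (\<tau> * B s \<omega> + (1 - \<tau>) * B z \<omega>))\<bar>)
            ` ({0..t} \<times> {0..t} \<times> {0..1}) \<noteq> {}"
      using \<open>0 \<le> t\<close> by auto
  next
    fix v
    assume "v \<in> (\<lambda>(s, z, \<tau>). \<bar>deriv (deriv u) (y + sqrt \<nu> * (\<tau> * B s \<omega> + (1 - \<tau>) * B z \<omega>))\<bar>)
                 ` ({0..t} \<times> {0..t} \<times> {0..1})"
    then obtain s z \<tau> where sz: "s \<in> {0..t}" "z \<in> {0..t}" and \<tau>: "0 \<le> \<tau>" "\<tau> \<le> 1"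
      and v: "v = \<bar>deriv (deriv u) (y + sqrt \<nu> * (\<tau> * B s \<omega> + (1 - \<tau>) * B z \<omega>))\<bar>" by auto
    define a where "a = y - y0 + sqrt \<nu> * B s \<omega>"
    define b where "b = y - y0 + sqrt \<nu> * B z \<omega>"
    have "y + sqrt \<nu> * (\<tau> * B s \<omega> + (1 - \<tau>) * B z \<omega>) - y0 = \<tau> * a + (1 - \<tau>) * b"
      by (simp add: a_def b_def algebra_simps)
    then have "v \<le> c * \<bar>\<tau> * a + (1 - \<tau>) * b\<bar> ^ k" using bound v by metis
    also have "\<dots> \<le> c * max (\<bar>a\<bar>) (\<bar>b\<bar>) ^ k"
    proof -
      have "\<bar>\<tau> * a + (1 - \<tau>) * b\<bar> \<le> \<tau> * \<bar>a\<bar> + (1 - \<tau>) * \<bar>b\<bar>"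
        using \<tau> abs_triangle_ineq[of "\<tau> * a" "(1 - \<tau>) * b"] by (simp add: abs_mult)
      also have "\<dots> \<le> \<tau> * max (\<bar>a\<bar>) (\<bar>b\<bar>) + (1 - \<tau>) * max (\<bar>a\<bar>) (\<bar>b\<bar>)"
        using \<tau> by (intro add_mono mult_left_mono) auto
      finally show ?thesis using \<open>0 \<le> c\<close> by (intro mult_left_mono power_mono) (auto simp: algebra_simps)
    qed
    also have "\<dots> \<le> c * (SUP s\<in>{0..t}. F s ^ k)"
      using sup[OF sz(1)] sup[OF sz(2)] \<open>0 \<le> c\<close>
      by (intro mult_left_mono) (auto simp: a_def b_def F_def max_def)
    finally show "v \<le> c * (SUP s\<in>{0..t}. F s ^ k)" .
  qed
qed

lemma det_small_implies_hfun_bound: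
  fixes u :: "real \<Rightarrow> real"
  assumes BM: "std_BM M B" and cont: "continuous_on UNIV (deriv (deriv u))"
    and per: "\<And>x. deriv (deriv u) (x + 2 * pi) = deriv (deriv u) x"
    and "0 < \<eta>" "0 < c'" and loc: "\<And>z. tdist z y0 \<le> \<eta> \<Longrightarrow> \<bar>deriv (deriv u) z\<bar> \<le> c' * tdist z y0 ^ k"
  shows "\<exists>c>0. \<forall>vt>0. \<forall>\<omega>'>0. implies_eps M
     (\<lambda>(\<nu>, t, y) \<epsilon>. {\<omega> \<in> space M. detM u B \<nu> t y \<omega> \<le> \<epsilon> * vt * t powr (\<omega>' + 3) * \<nu> powr \<omega>'})
     (\<lambda>(\<nu>, t, y) \<epsilon>. {\<omega> \<in> space M.
        hfun u B y \<nu> t \<omega> \<le> c * (SUP s\<in>{0..t}. \<bar>y - y0 + sqrt \<nu> * B s \<omega>\<bar> ^ k)})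
     {(\<nu>, t, y). 0 < \<nu> \<and> \<nu> \<le> 1 \<and> 0 < t \<and> t \<le> 1 / \<nu> \<and> \<bar>y - y0\<bar> < \<eta>}"
proof -
  obtain K where "\<And>x. norm (deriv (deriv u) x) \<le> K"
    using periodic_continuous_bounded[of "2 * pi" "deriv (deriv u)"] per cont by auto
  then obtain c where "0 < c" and bound: "\<And>x. \<bar>deriv (deriv u) x\<bar> \<le> c * \<bar>x - y0\<bar> ^ k"
    using bounded_le_power_dist[OF _ \<open>0 < \<eta>\<close> \<open>0 < c'\<close> loc] by auto
  have "hfun u B y \<nu> t \<omega> \<le> c * (SUP s\<in>{0..t}. \<bar>y - y0 + sqrt \<nu> * B s \<omega>\<bar> ^ k)"
    if "\<omega> \<in> space M" "0 < t" for \<omega> y \<nu> t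
    using BM that \<open>0 < c\<close> by (intro hfun_le_sup_power[OF bound]) (auto simp: std_BM_def)
  then show ?thesis
    using \<open>0 < c\<close> by (intro exI[of _ c] conjI allI impI implies_eps_of_subset) auto
qed

theorem lemma2p4:
  fixes M :: "'a measure" and B :: "real \<Rightarrow> 'a \<Rightarrow> real" and u :: "real \<Rightarrow> real"
  assumes BM: "std_BM M B"
    and smooth: "smooth_periodic u"
    and fin_crit: "finite {x \<in> {0..<2 * pi}. deriv u x = 0}"
  shows
    "(\<exists>\<eta>0>0. \<forall>\<eta>. 0 < \<eta> \<and> \<eta> \<le> \<eta>0 \<longrightarrow>
       (\<forall>vt>0. \<forall>\<omega>'>0.
          implies_eps M
            (\<lambda>(\<nu>, t, y) \<epsilon>. {\<omega> \<in> space M. detM u B \<nu> t y \<omega> \<le> \<epsilon> * vt * t powr (\<omega>' + 3) * \<nu> powr \<omega>'})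
            (\<lambda>(\<nu>, t, y) \<epsilon>. {\<omega> \<in> space M. \<forall>s\<in>{0..t}. infdist (y + sqrt \<nu> * B s \<omega>) {x. deriv u x = 0} \<le> \<eta>})
            {(\<nu>, t, y). 0 < \<nu> \<and> \<nu> \<le> 1 \<and> 0 < t \<and> t \<le> 1 / \<nu>}))
     \<and>
     (\<forall>y0 (n::nat) \<eta> c1 c2 c3 c4.
        n \<ge> 1 \<and> (\<forall>k\<in>{1..n}. (deriv ^^ k) u y0 = 0) \<and> (deriv ^^ Suc n) u y0 \<noteq> 0 \<and>
        \<eta> > 0 \<and> c1 > 0 \<and> c2 > 0 \<and> c3 > 0 \<and> c4 > 0 \<and>
        (\<forall>z. tdist z y0 \<le> \<eta> \<longrightarrow>
           c1 * tdist z y0 ^ n \<le> \<bar>deriv u z\<bar> \<and> \<bar>deriv u z\<bar> \<le> c2 * tdist z y0 ^ n \<and>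
           c3 * tdist z y0 ^ (n - 1) \<le> \<bar>deriv (deriv u) z\<bar> \<and>
           \<bar>deriv (deriv u) z\<bar> \<le> c4 * tdist z y0 ^ (n - 1))
        \<longrightarrow>
        (\<exists>c>0. \<forall>vt>0. \<forall>\<omega>'>0.
           implies_eps M
             (\<lambda>(\<nu>, t, y) \<epsilon>. {\<omega> \<in> space M. detM u B \<nu> t y \<omega> \<le> \<epsilon> * vt * t powr (\<omega>' + 3) * \<nu> powr \<omega>'})
             (\<lambda>(\<nu>, t, y) \<epsilon>. {\<omega> \<in> space M.
                hfun u B y \<nu> t \<omega> \<le> c * (SUP s\<in>{0..t}. \<bar>y - y0 + sqrt \<nu> * B s \<omega>\<bar> ^ (n - 1))})
             {(\<nu>, t, y). 0 < \<nu> \<and> \<nu> \<le> 1 \<and> 0 < t \<and> t \<le> 1 / \<nu> \<and> \<bar>y - y0\<bar> < \<eta>}))"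
proof -
  have diff: "\<And>k x. (deriv ^^ k) u differentiable (at x)" and per: "\<And>x. u (x + 2 * pi) = u x"
    using smooth by (simp_all add: smooth_periodic_def)
  have cont: "continuous_on UNIV ((deriv ^^ k) u)" for k
    using diff by (intro continuous_at_imp_continuous_on) (blast intro: differentiable_imp_continuous_within)
  have per_deriv: "\<And>x. (deriv ^^ k) u (x + 2 * pi) = (deriv ^^ k) u x" for k
  proof (induction k)
    case 0
    then show ?case using per by simp
  next
    case (Suc k)
    then show ?case using deriv_periodic[of "(deriv ^^ k) u" "2 * pi"] diff by simp
  qed
  have u1: "continuous_on UNIV (deriv u)" "\<And>x. deriv u (x + 2 * pi) = deriv u x"
    using cont[of 1] per_deriv[of 1] by simp_all
  have u2: "continuous_on UNIV (deriv (deriv u))" "\<And>x. deriv (deriv u) (x + 2 * pi) = deriv (deriv u) x"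
    using cont[of 2] per_deriv[of 2] by (simp_all add: numeral_2_eq_2)
  show ?thesis
    apply (rule conjI[OF exI[of _ "1::real"]])
    subgoal using det_small_implies_path_near_zeros[OF BM u1] by auto
    apply (intro allI impI)
    subgoal for y0 n \<eta> c1 c2 c3 c4
      using det_small_implies_hfun_bound[OF BM u2, of \<eta> c4 y0 "n - 1"] by auto
    done
qed

end
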